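(* For every nested sequence $\Gamma=(\Gamma_j)_{j\ge1}$, $\Gamma_1\supset\Gamma_2\supset\cdots$, of lattices in $H_3(\mathbb R)$, we have $\tau(S_\Gamma)\supset\xi_\Gamma$.
   Context: $H_3(\mathbb R)$: real $3\times3$ upper triangular unipotent matrices; $c(t)$ has $(1,3)$ entry $t$, other off-diagonal entries $0$; for $g$ with $(1,2)$ entry $t_1$ and $(2,3)$ entry $t_2$, $p(g)=(t_1,t_2)$. A lattice is a discrete subgroup of finite covolume. For a lattice $\Lambda$: $\xi_\Lambda>0$ with $\Lambda\cap\{c(t)\}=\{c(m\xi_\Lambda):m\in\mathbb Z\}$; $p(\Lambda)=A\mathbb Z^2$ and $p(\Lambda)^*:=(A^* )^{-1}\mathbb Z^2$. $S_\Gamma:=\bigcup_jp(\Gamma_j)^*$ and $\xi_\Gamma:=\bigcup_j\xi_{\Gamma_j}^{-1}\mathbb Z$; $S_\Gamma$ is off-rational. Off-rational: a subgroup $S\subset\mathbb R^m$ with cocompact closure and $S=AQ$ for $A\in GL_m(\mathbb R)$ and a subgroup $Q\subset\mathbb Q^m$; writing $Q=\bigcup_jA_j^{-1}\mathbb Z^m$ with $A_j\in GL_m(\mathbb R)\cap M_m(\mathbb Z)$, $A_1^{-1}\mathbb Z^m\subset A_2^{-1}\mathbb Z^m\subset\cdots$, set $\tau(S):=\bigcup_j\frac{\det A}{\det A_j}\mathbb Z$ (independent of the choices). *)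

theory Defs
  imports "HOL-Analysis.Analysis"
begin

text \<open>An element (t1, t2, t3) stands for the unipotent upper triangular matrix
  with (1,2) entry t1, (2,3) entry t2 and (1,3) entry t3.  Matrix multiplication
  becomes the following group law.  Lebesgue measure on these coordinates is
  (bi-invariant) Haar measure.\<close>

type_synonym h3 = "real \<times> real \<times> real"

definition h3_mult :: "h3 \<Rightarrow> h3 \<Rightarrow> h3" where
  "h3_mult a b = (fst a + fst b, fst (snd a) + fst (snd b),
                  snd (snd a) + snd (snd b) + fst a * fst (snd b))"

definition h3_one :: h3 where "h3_one = (0, 0, 0)"

definition h3_inv :: "h3 \<Rightarrow> h3" where
  "h3_inv a = (- fst a, - fst (snd a), fst a * fst (snd a) - snd (snd a))"

definition h3_c :: "real \<Rightarrow> h3" where "h3_c t = (0, 0, t)"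

definition h3_p :: "h3 \<Rightarrow> real^2" where
  "h3_p g = vector [fst g, fst (snd g)]"

definition h3_subgroup :: "h3 set \<Rightarrow> bool" where
  "h3_subgroup L \<longleftrightarrow> h3_one \<in> L \<and> (\<forall>a\<in>L. \<forall>b\<in>L. h3_mult a b \<in> L)
      \<and> (\<forall>a\<in>L. h3_inv a \<in> L)"

definition discrete_set :: "h3 set \<Rightarrow> bool" where
  "discrete_set L \<longleftrightarrow> (\<forall>x\<in>L. \<exists>e>0. \<forall>y\<in>L. dist y x < e \<longrightarrow> y = x)"

definition finite_covolume :: "h3 set \<Rightarrow> bool" where
  "finite_covolume L \<longleftrightarrow> (\<exists>F \<in> sets lborel. emeasure lborel F < \<infinity> \<and>
      (\<forall>g. \<exists>!\<gamma>. \<gamma> \<in> L \<and> (\<exists>f\<in>F. g = h3_mult \<gamma> f)))"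

definition h3_lattice :: "h3 set \<Rightarrow> bool" where
  "h3_lattice L \<longleftrightarrow> h3_subgroup L \<and> discrete_set L \<and> finite_covolume L"

definition xi :: "h3 set \<Rightarrow> real" where
  "xi L = (THE x. x > 0 \<and> {t. h3_c t \<in> L} = {of_int m * x | m. True})"

definition Zvec :: "(real^2) set" where
  "Zvec = {v. \<forall>i. v $ i \<in> \<int>}"

definition int_matrix :: "real^2^2 \<Rightarrow> bool" where
  "int_matrix A \<longleftrightarrow> (\<forall>i j. A $ i $ j \<in> \<int>)"

definition dual_lattice :: "(real^2) set \<Rightarrow> (real^2) set" where
  "dual_lattice P = (let A = (SOME A :: real^2^2. invertible A \<and> P = (\<lambda>z. A *v z) ` Zvec)
      in (\<lambda>z. matrix_inv (transpose A) *v z) ` Zvec)"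

definition S_Gamma :: "(nat \<Rightarrow> h3 set) \<Rightarrow> (real^2) set" where
  "S_Gamma \<Gamma> = (\<Union>j. dual_lattice (h3_p ` \<Gamma> j))"

definition xi_Gamma :: "(nat \<Rightarrow> h3 set) \<Rightarrow> real set" where
  "xi_Gamma \<Gamma> = (\<Union>j. {of_int m / xi (\<Gamma> j) | m. True})"

definition off_rat_rep :: "(real^2) set \<Rightarrow> real^2^2 \<Rightarrow> (nat \<Rightarrow> real^2^2) \<Rightarrow> bool" where
  "off_rat_rep S A As \<longleftrightarrow> invertible A \<and>
     (\<forall>j. invertible (As j) \<and> int_matrix (As j)) \<and>
     (\<forall>j. (\<lambda>z. matrix_inv (As j) *v z) ` Zvec \<subseteq> (\<lambda>z. matrix_inv (As (Suc j)) *v z) ` Zvec) \<and>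
     S = (\<lambda>q. A *v q) ` (\<Union>j. (\<lambda>z. matrix_inv (As j) *v z) ` Zvec)"

definition off_rational :: "(real^2) set \<Rightarrow> bool" where
  "off_rational S \<longleftrightarrow> (\<exists>K. compact K \<and> UNIV = {x + k | x k. x \<in> closure S \<and> k \<in> K})
     \<and> (\<exists>A As. off_rat_rep S A As)"

text \<open>\<tau>(S) := \<Union>_j (det A / det A_j) Z (independent of the choice of representation).\<close>
definition tau :: "(real^2) set \<Rightarrow> real set" where
  "tau S = (SOME T. \<exists>A As. off_rat_rep S A As \<and>
      T = (\<Union>j. {det A / det (As j) * of_int m | m. True}))"

end

theory Submission
  imports Defs
begin

text \<open>For a lattice \<Lambda>, the commutator of g and h is c(det(p g, p h)), so these determinants
  lie in \<Lambda> \<inter> c(\<real>) = c(\<xi>_\<Lambda> \<int>). Finite covolume forces p(\<Lambda>) to be non-collinear (otherwise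
  boxes stacked along a direction transverse to p(\<Lambda>) would give packings of unbounded
  volume), hence p(\<Lambda>) = A \<int>^2 is a lattice with det A \<in> \<xi>_\<Lambda> \<int>, and 1/\<xi>_\<Lambda> is an
  integer multiple of det ((A^*)^-1) = 1/det A. The duals p(\<Gamma>_j)^* increase with j,
  so S_\<Gamma> is their union, an off-rational set. In any representation S_\<Gamma> = A' Q with
  Q = \<Union>_i A_i^{-1} \<int>^2, a basis of p(\<Gamma>_j)^* lies in some A' A_i^{-1} \<int>^2, so its determinant,
  and with it 1/\<xi>_{\<Gamma>_j}, is an integer multiple of det A' / det A_i.\<close>

section \<open>The group law in coordinates\<close>

definition det2 :: "real^2 \<Rightarrow> real^2 \<Rightarrow> real" where
  "det2 u v = u$1 * v$2 - u$2 * v$1"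

lemma h3_mult_assoc: "h3_mult (h3_mult a b) c = h3_mult a (h3_mult b c)"
  by (simp add: h3_mult_def algebra_simps)

lemma h3_mult_one_left [simp]: "h3_mult h3_one a = a"
  and h3_mult_one_right [simp]: "h3_mult a h3_one = a"
  by (simp_all add: h3_mult_def h3_one_def)

lemma h3_mult_inv_left [simp]: "h3_mult (h3_inv a) a = h3_one"
  and h3_mult_inv_right [simp]: "h3_mult a (h3_inv a) = h3_one"
  by (simp_all add: h3_mult_def h3_one_def h3_inv_def algebra_simps)

lemma h3_mult_inv_cancel_left [simp]: "h3_mult (h3_inv a) (h3_mult a b) = b"
  and h3_mult_inv_cancel_left' [simp]: "h3_mult a (h3_mult (h3_inv a) b) = b"
  by (simp_all add: h3_mult_def h3_inv_def algebra_simps)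

lemma h3_one_eq_zero: "h3_one = 0"
  by (simp add: h3_one_def zero_prod_def)

lemma h3_c_mult: "h3_mult (h3_c s) (h3_c t) = h3_c (s + t)"
  by (simp add: h3_mult_def h3_c_def)

lemma h3_c_inv: "h3_inv (h3_c t) = h3_c (- t)"
  by (simp add: h3_inv_def h3_c_def)

lemma h3_c_eq_one_iff: "h3_c t = h3_one \<longleftrightarrow> t = 0"
  by (simp add: h3_c_def h3_one_def)

lemma h3_p_nth [simp]: "h3_p g $ 1 = fst g" "h3_p g $ 2 = fst (snd g)"
  by (simp_all add: h3_p_def)

lemma h3_p_mult: "h3_p (h3_mult a b) = h3_p a + h3_p b"
  by (simp add: vec_eq_iff forall_2 h3_mult_def)

lemma h3_p_inv: "h3_p (h3_inv a) = - h3_p a"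
  by (simp add: vec_eq_iff forall_2 h3_inv_def)

lemma h3_p_one: "h3_p h3_one = 0"
  by (simp add: vec_eq_iff forall_2 h3_one_def)

lemma h3_commutator:
  "h3_mult (h3_mult g h) (h3_mult (h3_inv g) (h3_inv h)) = h3_c (det2 (h3_p g) (h3_p h))"
  by (simp add: h3_mult_def h3_inv_def h3_c_def det2_def algebra_simps)

lemma norm_h3_le: "norm (x::h3) \<le> \<bar>fst x\<bar> + \<bar>fst (snd x)\<bar> + \<bar>snd (snd x)\<bar>"
proof -
  have "norm x \<le> norm (fst x) + norm (snd x)"
    by (metis norm_Pair_le prod.collapse)
  also have "norm (snd x) \<le> norm (fst (snd x)) + norm (snd (snd x))"
    by (metis norm_Pair_le prod.collapse)
  finally show ?thesis by simp
qed

lemma abs_h3_coords_le_norm: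
  "\<bar>fst x\<bar> \<le> norm (x::h3)" "\<bar>fst (snd x)\<bar> \<le> norm x" "\<bar>snd (snd x)\<bar> \<le> norm x"
proof -
  have "norm (fst x) \<le> norm x" "norm (snd x) \<le> norm x"
    "norm (fst (snd x)) \<le> norm (snd x)" "norm (snd (snd x)) \<le> norm (snd x)"
    by (metis norm_fst_le norm_snd_le prod.collapse)+
  then show "\<bar>fst x\<bar> \<le> norm x" "\<bar>fst (snd x)\<bar> \<le> norm x" "\<bar>snd (snd x)\<bar> \<le> norm x"
    by simp_all
qed

section \<open>Invariance of Lebesgue measure under translations\<close>

lemma nn_integral_lborel_pair:
  fixes g :: "'a::euclidean_space \<times> 'b::euclidean_space \<Rightarrow> ennreal"
  assumes [measurable]: "g \<in> borel_measurable borel"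
  shows "(\<integral>\<^sup>+x. g x \<partial>lborel) = (\<integral>\<^sup>+x1. \<integral>\<^sup>+x2. g (x1, x2) \<partial>lborel \<partial>lborel)"
proof -
  have "(\<integral>\<^sup>+x. g x \<partial>lborel) = (\<integral>\<^sup>+x. g x \<partial>(lborel \<Otimes>\<^sub>M lborel))"
    by (simp add: lborel_prod)
  also have "\<dots> = (\<integral>\<^sup>+x1. \<integral>\<^sup>+x2. g (x1, x2) \<partial>lborel \<partial>lborel)"
    by (rule lborel.nn_integral_fst[symmetric]) (simp add: lborel_prod)
  finally show ?thesis .
qed

lemma nn_integral_lborel_h3:
  fixes g :: "h3 \<Rightarrow> ennreal"
  assumes [measurable]: "g \<in> borel_measurable borel"
  shows "(\<integral>\<^sup>+x. g x \<partial>lborel) = (\<integral>\<^sup>+x1. \<integral>\<^sup>+x2. \<integral>\<^sup>+x3. g (x1, x2, x3) \<partial>lborel \<partial>lborel \<partial>lborel)"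
  by (simp add: nn_integral_lborel_pair)

lemma nn_integral_lborel_h3_shear:
  fixes f :: "h3 \<Rightarrow> ennreal"
  assumes [measurable]: "f \<in> borel_measurable borel"
  shows "(\<integral>\<^sup>+x. f (fst x, fst (snd x), snd (snd x) + b1 * fst x + b2 * fst (snd x)) \<partial>lborel)
       = (\<integral>\<^sup>+x. f x \<partial>lborel)"
proof -
  have "(\<lambda>x. f (fst x, fst (snd x), snd (snd x) + b1 * fst x + b2 * fst (snd x)))
      \<in> borel_measurable borel"
    by (rule measurable_compose[OF _ assms], rule borel_measurable_continuous_onI,
        intro continuous_intros)
  then have "(\<integral>\<^sup>+x. f (fst x, fst (snd x), snd (snd x) + b1 * fst x + b2 * fst (snd x)) \<partial>lborel)
     = (\<integral>\<^sup>+x1. \<integral>\<^sup>+x2. \<integral>\<^sup>+x3. f (x1, x2, x3 + b1 * x1 + b2 * x2) \<partial>lborel \<partial>lborel \<partial>lborel)"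
    by (simp add: nn_integral_lborel_h3)
  also have "\<dots> = (\<integral>\<^sup>+x1. \<integral>\<^sup>+x2. \<integral>\<^sup>+x3. f (x1, x2, x3) \<partial>lborel \<partial>lborel \<partial>lborel)"
  proof (rule nn_integral_cong, rule nn_integral_cong)
    fix x1 x2 :: real
    have [measurable]: "(\<lambda>x3. f (x1, x2, x3)) \<in> borel_measurable borel" by measurable
    show "(\<integral>\<^sup>+x3. f (x1, x2, x3 + b1 * x1 + b2 * x2) \<partial>lborel) = (\<integral>\<^sup>+x3. f (x1, x2, x3) \<partial>lborel)"
      using nn_integral_real_affine[of "\<lambda>x3. f (x1, x2, x3)" 1 "b1 * x1 + b2 * x2"]
      by (simp add: add.commute add.left_commute)
  qed
  also have "\<dots> = (\<integral>\<^sup>+x. f x \<partial>lborel)"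
    by (simp add: nn_integral_lborel_h3)
  finally show ?thesis .
qed

text \<open>Left and right multiplications are translations composed with shears
  (x1, x2, x3) \<mapsto> (x1, x2, x3 + b1 x1 + b2 x2), which have Jacobian 1.\<close>

lemma emeasure_lborel_h3_affine_vimage:
  fixes A :: "h3 set"
  assumes A: "A \<in> sets borel"
  shows "emeasure lborel
      ((\<lambda>x. (a1 + fst x, a2 + fst (snd x), a3 + snd (snd x) + b1 * fst x + b2 * fst (snd x))) -` A)
    = emeasure lborel A"
proof -
  let ?a = "(a1, a2, a3) :: h3"
  let ?T = "\<lambda>x. (a1 + fst x, a2 + fst (snd x), a3 + snd (snd x) + b1 * fst x + b2 * fst (snd x))"
  have T: "?T \<in> borel_measurable borel"
    by (rule borel_measurable_continuous_onI) (intro continuous_intros)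
  have pre: "?T -` A \<in> sets borel"
    using measurable_sets[OF T A] by simp
  have f: "(\<lambda>y. indicator A (?a + y) :: ennreal) \<in> borel_measurable borel"
    by (rule measurable_compose[OF _ borel_measurable_indicator[OF A]])
       (rule borel_measurable_continuous_onI, intro continuous_intros)
  have "emeasure lborel (?T -` A) = (\<integral>\<^sup>+x. indicator (?T -` A) x \<partial>lborel)"
    using pre by simp
  also have "\<dots> = (\<integral>\<^sup>+x. indicator A (?a + (fst x, fst (snd x),
      snd (snd x) + b1 * fst x + b2 * fst (snd x))) \<partial>lborel)"
    by (intro nn_integral_cong) (auto simp: indicator_def algebra_simps)
  also have "\<dots> = (\<integral>\<^sup>+x. indicator A (?a + x) \<partial>lborel)"
    by (rule nn_integral_lborel_h3_shear[OF f])
  also have "\<dots> = (\<integral>\<^sup>+x. indicator A x \<partial>(distr lborel borel ((+) ?a)))"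
    using A by (subst nn_integral_distr) auto
  also have "\<dots> = emeasure lborel A"
    using A by (simp add: lborel_distr_plus)
  finally show ?thesis .
qed

lemma emeasure_h3_left_mult_vimage:
  "A \<in> sets borel \<Longrightarrow> emeasure lborel ((\<lambda>x. h3_mult g x) -` A) = emeasure lborel A"
  using emeasure_lborel_h3_affine_vimage[of A "fst g" "fst (snd g)" "snd (snd g)" 0 "fst g"]
  by (simp add: h3_mult_def algebra_simps)

lemma emeasure_h3_right_mult_vimage:
  "A \<in> sets borel \<Longrightarrow> emeasure lborel ((\<lambda>x. h3_mult x g) -` A) = emeasure lborel A"
  using emeasure_lborel_h3_affine_vimage[of A "fst g" "fst (snd g)" "snd (snd g)" "fst (snd g)" 0]
  by (simp add: h3_mult_def algebra_simps)

lemma h3_left_mult_measurable: "(\<lambda>x. h3_mult g x) \<in> borel_measurable borel"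
  by (rule borel_measurable_continuous_onI) (simp add: h3_mult_def, intro continuous_intros)

lemma h3_right_mult_measurable: "(\<lambda>x. h3_mult x g) \<in> borel_measurable borel"
  by (rule borel_measurable_continuous_onI) (simp add: h3_mult_def, intro continuous_intros)

definition h3_box :: "real \<Rightarrow> h3 set" where
  "h3_box r = {x. \<bar>fst x\<bar> < r \<and> \<bar>fst (snd x)\<bar> < r \<and> \<bar>snd (snd x)\<bar> < r}"

lemma h3_box_borel: "h3_box r \<in> sets borel"
  unfolding h3_box_def
  by (rule borel_open) (auto intro!: open_Collect_conj open_Collect_less continuous_intros)

lemma emeasure_h3_box: "r > 0 \<Longrightarrow> emeasure lborel (h3_box r) = ennreal (8 * r^3)"
proof -
  assume r: "r > 0"
  have "h3_box r = {-r<..<r} \<times> {-r<..<r} \<times> {-r<..<r}"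
    by (auto simp: h3_box_def abs_less_iff)
  also have "emeasure lborel \<dots>
      = emeasure lborel {-r<..<r} * emeasure lborel ({-r<..<r} \<times> {-r<..<r} :: (real \<times> real) set)"
    by (subst lborel_prod[symmetric], rule lborel.emeasure_pair_measure_Times)
       (auto intro!: borel_open open_Times)
  also have "emeasure lborel ({-r<..<r} \<times> {-r<..<r} :: (real \<times> real) set)
      = emeasure lborel {-r<..<r} * emeasure lborel {-r<..<r}"
    by (subst lborel_prod[symmetric], rule lborel.emeasure_pair_measure_Times) auto
  finally show ?thesis
    using r by (simp add: ennreal_mult[symmetric] power3_eq_cube)
qed

section \<open>Lattices and packings\<close>

definition packing :: "h3 set \<Rightarrow> h3 set \<Rightarrow> bool" where
  "packing L E \<longleftrightarrow> (\<forall>x\<in>E. \<forall>\<gamma>\<in>L. h3_mult \<gamma> x \<in> E \<longrightarrow> \<gamma> = h3_one)"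

lemma packing_right_translate: "packing L E \<Longrightarrow> packing L ((\<lambda>y. h3_mult y g) -` E)"
  by (simp add: packing_def h3_mult_assoc)

lemma inner_real2: "(v::real^2) \<bullet> w = v$1 * w$1 + v$2 * w$2"
  by (simp add: inner_vec_def sum_2)

lemma det2_zero_imp_annihilator:
  fixes P :: "(real^2) set"
  assumes "\<And>u v. u \<in> P \<Longrightarrow> v \<in> P \<Longrightarrow> det2 u v = 0"
  obtains w where "w \<noteq> 0" "\<And>u. u \<in> P \<Longrightarrow> w \<bullet> u = 0"
proof (cases "P \<subseteq> {0}")
  case True
  then show ?thesis by (intro that[of "axis 1 1"]) (auto simp: axis_eq_0_iff)
next
  case False
  then obtain u0 where u0: "u0 \<in> P" "u0 \<noteq> 0" by blast
  show ?thesis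
  proof (rule that[of "vector [- u0$2, u0$1]"])
    show "vector [- u0$2, u0$1] \<noteq> (0::real^2)"
      using u0(2) by (auto simp: vec_eq_iff forall_2)
    show "vector [- u0$2, u0$1] \<bullet> u = 0" if "u \<in> P" for u
      using assms[OF u0(1) that] by (simp add: inner_real2 det2_def algebra_simps)
  qed
qed

lemma packing_UN_if_levels_separated:
  assumes packing: "\<And>k. packing L (B k)"
    and invariant: "\<And>\<gamma> x. \<gamma> \<in> L \<Longrightarrow> \<phi> (h3_mult \<gamma> x) = \<phi> x"
    and separated: "\<And>k m x y. x \<in> B k \<Longrightarrow> y \<in> B m \<Longrightarrow> \<phi> x = \<phi> y \<Longrightarrow> k = m"
  shows "packing L (\<Union>k\<in>K. B k)"
  unfolding packing_def
proof (intro ballI impI)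
  fix x \<gamma> assume "x \<in> (\<Union>k\<in>K. B k)" "\<gamma> \<in> L" "h3_mult \<gamma> x \<in> (\<Union>k\<in>K. B k)"
  then obtain k m where k: "x \<in> B k" and m: "h3_mult \<gamma> x \<in> B m" and \<gamma>: "\<gamma> \<in> L"
    by blast
  have "m = k" using separated[OF m k] invariant[OF \<gamma>] by simp
  with k m \<gamma> packing[of k] show "\<gamma> = h3_one" unfolding packing_def by blast
qed

lemma abs_inner_h3_p_le_box:
  assumes "x \<in> h3_box \<rho>"
  shows "\<bar>w \<bullet> h3_p x\<bar> \<le> (\<bar>w$1\<bar> + \<bar>w$2\<bar>) * \<rho>"
proof -
  have "\<bar>w \<bullet> h3_p x\<bar> \<le> \<bar>w$1\<bar> * \<bar>fst x\<bar> + \<bar>w$2\<bar> * \<bar>fst (snd x)\<bar>"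
    unfolding inner_real2 h3_p_nth abs_mult[symmetric] by (rule abs_triangle_ineq)
  also have "\<dots> \<le> \<bar>w$1\<bar> * \<rho> + \<bar>w$2\<bar> * \<rho>"
    using assms by (intro add_mono mult_left_mono) (auto simp: h3_box_def)
  finally show ?thesis by (simp add: algebra_simps)
qed

locale h3_lat =
  fixes L :: "h3 set"
  assumes lattice: "h3_lattice L"
begin

lemma one_mem: "h3_one \<in> L"
  and mult_mem: "a \<in> L \<Longrightarrow> b \<in> L \<Longrightarrow> h3_mult a b \<in> L"
  and inv_mem: "a \<in> L \<Longrightarrow> h3_inv a \<in> L"
  using lattice by (auto simp: h3_lattice_def h3_subgroup_def)

lemma commutator_mem: "g \<in> L \<Longrightarrow> h \<in> L \<Longrightarrow> h3_c (det2 (h3_p g) (h3_p h)) \<in> L"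
  by (metis h3_commutator mult_mem inv_mem)

lemma one_isolated:
  obtains e where "e > 0" "\<And>y. y \<in> L \<Longrightarrow> norm y < e \<Longrightarrow> y = h3_one"
proof -
  from lattice one_mem obtain e where "e > 0" "\<forall>y\<in>L. dist y h3_one < e \<longrightarrow> y = h3_one"
    unfolding h3_lattice_def discrete_set_def by blast
  then show ?thesis using that by (auto simp: h3_one_eq_zero dist_norm)
qed

text \<open>Left translation is not an isometry of the coordinate metric, so the isolation of
  the identity only gives a separation of lattice points that degrades with their size.\<close>

lemma dist_ge_if_ne:
  assumes e: "e > 0" "\<And>y. y \<in> L \<Longrightarrow> norm y < e \<Longrightarrow> y = h3_one"
    and g: "g \<in> L" and d: "d \<in> L" "norm d \<le> n" and ne: "g \<noteq> d"
  shows "e / (3 + n) \<le> dist g d"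
proof -
  have n: "0 \<le> n" using d(2) norm_ge_zero order_trans by blast
  let ?y = "h3_mult (h3_inv d) g"
  let ?u = "g - d"
  have "?y \<noteq> h3_one"
  proof
    assume "?y = h3_one"
    then have "h3_mult d ?y = d" by simp
    with ne show False by simp
  qed
  then have ey: "e \<le> norm ?y" using e(2) mult_mem[OF inv_mem[OF d(1)] g] not_less by blast
  have y_eq: "?y = (fst ?u, fst (snd ?u), snd (snd ?u) - fst d * fst (snd ?u))"
    by (simp add: h3_mult_def h3_inv_def algebra_simps)
  have "norm ?y \<le> \<bar>fst ?u\<bar> + \<bar>fst (snd ?u)\<bar> + \<bar>snd (snd ?u) - fst d * fst (snd ?u)\<bar>"
    using norm_h3_le[of ?y] by (simp only: y_eq fst_conv snd_conv)
  also have "\<dots> \<le> \<bar>fst ?u\<bar> + \<bar>fst (snd ?u)\<bar> + \<bar>snd (snd ?u)\<bar> + \<bar>fst d\<bar> * \<bar>fst (snd ?u)\<bar>"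
    by (simp add: abs_mult[symmetric] abs_triangle_ineq4)
  also have "\<dots> \<le> norm ?u + norm ?u + norm ?u + n * norm ?u"
    using abs_h3_coords_le_norm[of ?u] abs_h3_coords_le_norm[of d] d(2)
    by (intro add_mono mult_mono) auto
  also have "\<dots> = (3 + n) * dist g d" by (simp add: dist_norm algebra_simps)
  finally have "e \<le> (3 + n) * dist g d" using ey by linarith
  then show ?thesis using n by (simp add: divide_le_eq mult.commute)
qed

lemma countable: "countable L"
proof -
  obtain e where e: "e > 0" "\<And>y. y \<in> L \<Longrightarrow> norm y < e \<Longrightarrow> y = h3_one"
    using one_isolated by blast
  have "finite (L \<inter> cball 0 (real n))" for n :: nat
  proof -
    have "uniform_discrete (L \<inter> cball 0 (real n))"
      unfolding uniform_discrete_def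
    proof (intro exI[of _ "e / (3 + real n)"] conjI ballI impI)
      show "e / (3 + real n) > 0" using e(1) by simp
      fix g d assume "g \<in> L \<inter> cball 0 (real n)" "d \<in> L \<inter> cball 0 (real n)"
        "dist g d < e / (3 + real n)"
      then show "g = d" using dist_ge_if_ne[OF e, of g d "real n"] by (auto simp: dist_commute)
    qed
    then show ?thesis using uniform_discrete_finite_iff by blast
  qed
  moreover have "L = (\<Union>n. L \<inter> cball 0 (real n))"
    by (auto simp: real_arch_simple)
  ultimately show ?thesis
    by (metis countable_UN countable_finite countableI_type)
qed

lemma packing_translates_disjoint:
  assumes "packing L E" "\<gamma> \<in> L" "\<delta> \<in> L" "\<gamma> \<noteq> \<delta>"
  shows "(\<lambda>f. h3_mult \<gamma> f) -` E \<inter> (\<lambda>f. h3_mult \<delta> f) -` E = {}"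
proof (rule ccontr)
  assume "(\<lambda>f. h3_mult \<gamma> f) -` E \<inter> (\<lambda>f. h3_mult \<delta> f) -` E \<noteq> {}"
  then obtain f where f: "h3_mult \<gamma> f \<in> E" "h3_mult \<delta> f \<in> E" by blast
  have "h3_mult \<delta> f = h3_mult (h3_mult \<delta> (h3_inv \<gamma>)) (h3_mult \<gamma> f)"
    by (simp add: h3_mult_assoc)
  with f have "h3_mult \<delta> (h3_inv \<gamma>) = h3_one"
    using assms(1) mult_mem[OF assms(3) inv_mem[OF assms(2)]] by (auto simp: packing_def)
  then have "h3_mult (h3_mult \<delta> (h3_inv \<gamma>)) \<gamma> = \<gamma>" by simp
  with assms(4) show False by (simp add: h3_mult_assoc)
qed

text \<open>A packing E meets each orbit L x at most once, so cutting it along the translates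
  \<gamma> F of a fundamental domain and translating back the pieces gives disjoint subsets of F
  of the same total measure.\<close>

lemma emeasure_packing_le_fundamental_domain:
  assumes F: "F \<in> sets borel" and Fd: "\<And>g. \<exists>!\<gamma>. \<gamma> \<in> L \<and> (\<exists>f\<in>F. g = h3_mult \<gamma> f)"
    and E: "E \<in> sets borel" "packing L E"
  shows "emeasure lborel E \<le> emeasure lborel F"
proof -
  define \<Phi> where "\<Phi> \<gamma> = E \<inter> (\<lambda>x. h3_mult (h3_inv \<gamma>) x) -` F" for \<gamma>
  define \<Psi> where "\<Psi> \<gamma> = (\<lambda>f. h3_mult \<gamma> f) -` \<Phi> \<gamma>" for \<gamma>
  have \<Phi>_borel: "\<Phi> \<gamma> \<in> sets borel" for \<gamma>
    unfolding \<Phi>_def using measurable_sets[OF h3_left_mult_measurable F] E by simp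
  have \<Psi>_borel: "\<Psi> \<gamma> \<in> sets borel" for \<gamma>
    unfolding \<Psi>_def using measurable_sets[OF h3_left_mult_measurable \<Phi>_borel] by simp
  have E_eq: "E = (\<Union>\<gamma>\<in>L. \<Phi> \<gamma>)"
  proof (intro equalityI subsetI)
    fix x assume x: "x \<in> E"
    from Fd[of x] obtain \<gamma> f where "\<gamma> \<in> L" "f \<in> F" "x = h3_mult \<gamma> f" by blast
    with x show "x \<in> (\<Union>\<gamma>\<in>L. \<Phi> \<gamma>)" by (intro UN_I[of \<gamma>]) (auto simp: \<Phi>_def)
  qed (auto simp: \<Phi>_def)
  have "disjoint_family_on \<Phi> L"
    unfolding disjoint_family_on_def
  proof (intro ballI impI)
    fix \<gamma> \<delta> assume "\<gamma> \<in> L" "\<delta> \<in> L" "\<gamma> \<noteq> \<delta>"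
    moreover have "x = h3_mult \<gamma> (h3_mult (h3_inv \<gamma>) x)" for \<gamma> x
      by simp
    ultimately show "\<Phi> \<gamma> \<inter> \<Phi> \<delta> = {}"
      unfolding \<Phi>_def using Fd by blast
  qed
  moreover have "disjoint_family_on \<Psi> L"
    unfolding disjoint_family_on_def
  proof (intro ballI impI)
    fix \<gamma> \<delta> assume "\<gamma> \<in> L" "\<delta> \<in> L" "\<gamma> \<noteq> \<delta>"
    moreover have "\<Psi> \<gamma> \<subseteq> (\<lambda>f. h3_mult \<gamma> f) -` E" for \<gamma>
      by (auto simp: \<Psi>_def \<Phi>_def)
    ultimately show "\<Psi> \<gamma> \<inter> \<Psi> \<delta> = {}"
      using packing_translates_disjoint[OF E(2)] by blast
  qed
  moreover have "(\<Union>\<gamma>\<in>L. \<Psi> \<gamma>) \<subseteq> F"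
    unfolding \<Psi>_def \<Phi>_def by (simp add: subset_iff)
  moreover have "emeasure lborel (\<Psi> \<gamma>) = emeasure lborel (\<Phi> \<gamma>)" for \<gamma>
    unfolding \<Psi>_def by (rule emeasure_h3_left_mult_vimage[OF \<Phi>_borel])
  ultimately have "emeasure lborel E = emeasure lborel (\<Union>\<gamma>\<in>L. \<Psi> \<gamma>)"
    unfolding E_eq
    by (simp add: emeasure_UN_countable \<Phi>_borel \<Psi>_borel countable)
  also have "\<dots> \<le> emeasure lborel F"
    by (rule emeasure_mono[OF \<open>(\<Union>\<gamma>\<in>L. \<Psi> \<gamma>) \<subseteq> F\<close>]) (simp add: F)
  finally show ?thesis .
qed

lemma packing_emeasure_bounded:
  obtains r where "r \<ge> 0" "\<And>E. E \<in> sets borel \<Longrightarrow> packing L E \<Longrightarrow> emeasure lborel E \<le> ennreal r"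
proof -
  obtain F where F: "F \<in> sets borel" "emeasure lborel F < \<infinity>"
    "\<And>g. \<exists>!\<gamma>. \<gamma> \<in> L \<and> (\<exists>f\<in>F. g = h3_mult \<gamma> f)"
    using lattice unfolding h3_lattice_def finite_covolume_def by auto
  obtain r where r: "r \<ge> 0" "emeasure lborel F = ennreal r"
    using F(2) by (cases "emeasure lborel F") auto
  show ?thesis
    by (rule that[OF r(1)]) (simp add: emeasure_packing_le_fundamental_domain[OF F(1,3)] flip: r(2))
qed

lemma small_box_packing:
  obtains \<rho> where "\<rho> > 0" "packing L (h3_box \<rho>)"
proof -
  obtain e where e: "e > 0" "\<And>y. y \<in> L \<Longrightarrow> norm y < e \<Longrightarrow> y = h3_one"
    using one_isolated by blast
  define \<rho> where "\<rho> = min 1 e / 9"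
  have \<rho>: "\<rho> > 0" "\<rho> \<le> 1" "9 * \<rho> \<le> e" using e by (auto simp: \<rho>_def)
  have "\<gamma> = h3_one" if \<gamma>: "\<gamma> \<in> L" and x: "x \<in> h3_box \<rho>" "h3_mult \<gamma> x \<in> h3_box \<rho>" for \<gamma> x
  proof -
    define x' where "x' = h3_mult \<gamma> x"
    have "\<gamma> = h3_mult x' (h3_inv x)" by (simp add: x'_def h3_mult_assoc)
    also have "\<dots> = (fst x' - fst x, fst (snd x') - fst (snd x),
        snd (snd x') - snd (snd x) - (fst x' - fst x) * fst (snd x))"
      by (simp add: h3_mult_def h3_inv_def algebra_simps)
    finally have \<gamma>_eq: "\<gamma> = \<dots>" .
    have b: "\<bar>fst x\<bar> < \<rho>" "\<bar>fst (snd x)\<bar> < \<rho>" "\<bar>snd (snd x)\<bar> < \<rho>"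
      "\<bar>fst x'\<bar> < \<rho>" "\<bar>fst (snd x')\<bar> < \<rho>" "\<bar>snd (snd x')\<bar> < \<rho>"
      using x by (auto simp: h3_box_def x'_def)
    have "\<bar>(fst x' - fst x) * fst (snd x)\<bar> \<le> 2 * \<rho> * \<rho>"
      unfolding abs_mult using b by (intro mult_mono) auto
    then have "norm \<gamma> < 6 * \<rho> + 2 * \<rho> * \<rho>"
      using norm_h3_le[of \<gamma>] b unfolding \<gamma>_eq fst_conv snd_conv by linarith
    also have "\<dots> < e" using \<rho> mult_right_le_one_le[of \<rho> \<rho>] by linarith
    finally show ?thesis using e(2)[OF \<gamma>] by blast
  qed
  with \<rho>(1) that show ?thesis by (auto simp: packing_def)
qed

text \<open>If a nonzero linear form \<phi> = w \<bullet> p vanishes on L, then the right translates of a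
  small box by elements on which \<phi> takes widely spaced values are packings lying in
  distinct L-invariant slabs \<open>\<phi> \<approx> const\<close>; their union is a packing of arbitrarily large
  measure.\<close>

lemma large_packing_if_annihilated:
  assumes w: "w \<noteq> 0" "\<And>g. g \<in> L \<Longrightarrow> w \<bullet> h3_p g = 0"
    and \<rho>: "\<rho> > 0" "packing L (h3_box \<rho>)"
  shows "\<exists>E \<in> sets borel. packing L E \<and> emeasure lborel E = ennreal (real N * (8 * \<rho>^3))"
proof -
  define \<phi> where "\<phi> x = w \<bullet> h3_p x" for x
  define C where "C = \<bar>w$1\<bar> + \<bar>w$2\<bar>"
  define a where "a = 2 * C * \<rho> + 1"
  define s :: "nat \<Rightarrow> h3" where
    "s k = (real k * a / (w \<bullet> w) * w$1, real k * a / (w \<bullet> w) * w$2, 0)" for k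
  define B where "B k = (\<lambda>y. h3_mult y (h3_inv (s k))) -` h3_box \<rho>" for k
  have "C \<ge> 0" by (simp add: C_def)
  then have a: "a > 0" "2 * C * \<rho> < a" using \<rho>(1) by (simp_all add: a_def add_nonneg_pos)
  have \<phi>_mult: "\<phi> (h3_mult x y) = \<phi> x + \<phi> y" for x y
    by (simp add: \<phi>_def h3_p_mult inner_add_right)
  have "h3_p (s k) = (real k * a / (w \<bullet> w)) *\<^sub>R w" for k
    by (simp add: s_def vec_eq_iff forall_2)
  then have \<phi>_s: "\<phi> (s k) = real k * a" for k
    using w(1) by (simp add: \<phi>_def)
  have \<phi>_inv: "\<phi> (h3_inv x) = - \<phi> x" for x
    by (simp add: \<phi>_def h3_p_inv)
  have B_level: "\<bar>\<phi> y - real k * a\<bar> \<le> C * \<rho>" if "y \<in> B k" for y k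
  proof -
    have "\<bar>\<phi> (h3_mult y (h3_inv (s k)))\<bar> \<le> C * \<rho>"
      using that abs_inner_h3_p_le_box unfolding B_def \<phi>_def C_def by simp
    then show ?thesis by (simp add: \<phi>_mult \<phi>_inv \<phi>_s)
  qed
  have B_level_eq: "k = m" if "y \<in> B k" "y' \<in> B m" "\<phi> y = \<phi> y'" for y y' k m
  proof -
    from B_level[OF that(1)] B_level[OF that(2)] that(3) a(2)
    have "(real k - real m) * a < 1 * a" "(real m - real k) * a < 1 * a"
      unfolding abs_le_iff left_diff_distrib by linarith+
    then have "real k < real (m + 1)" "real m < real (k + 1)"
      using a(1) mult_right_less_imp_less[of _ a 1] by force+
    then show "k = m" unfolding of_nat_less_iff by linarith
  qed
  have B_borel: "B k \<in> sets borel" for k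
    unfolding B_def using measurable_sets[OF h3_right_mult_measurable h3_box_borel] by simp
  have "packing L (\<Union>k<N. B k)"
  proof (rule packing_UN_if_levels_separated)
    show "packing L (B k)" for k
      unfolding B_def by (rule packing_right_translate[OF \<rho>(2)])
    show "\<phi> (h3_mult \<gamma> x) = \<phi> x" if "\<gamma> \<in> L" for \<gamma> x
      using w(2)[OF that] by (simp add: \<phi>_mult) (simp add: \<phi>_def)
  qed (use B_level_eq in blast)
  moreover have "emeasure lborel (\<Union>k<N. B k) = ennreal (real N * (8 * \<rho>^3))"
  proof -
    have "disjoint_family_on B {..<N}"
      unfolding disjoint_family_on_def using B_level_eq by blast
    then have "emeasure lborel (\<Union>k<N. B k) = (\<Sum>k<N. emeasure lborel (B k))"
      by (intro sum_emeasure[symmetric]) (use B_borel in auto)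
    also have "\<dots> = of_nat N * ennreal (8 * \<rho>^3)"
      by (simp add: B_def emeasure_h3_right_mult_vimage[OF h3_box_borel] emeasure_h3_box[OF \<rho>(1)])
    finally show ?thesis
      using \<rho>(1) by (simp add: ennreal_mult[symmetric] ennreal_of_nat_eq_real_of_nat)
  qed
  moreover have "(\<Union>k<N. B k) \<in> sets borel" using B_borel by (intro sets.finite_UN) auto
  ultimately show ?thesis by blast
qed

lemma noncollinear: "\<exists>g\<in>L. \<exists>h\<in>L. det2 (h3_p g) (h3_p h) \<noteq> 0"
proof (rule ccontr)
  assume "\<not> ?thesis"
  then have "\<And>u v. u \<in> h3_p ` L \<Longrightarrow> v \<in> h3_p ` L \<Longrightarrow> det2 u v = 0" by blast
  then obtain w where w: "w \<noteq> 0" "\<And>u. u \<in> h3_p ` L \<Longrightarrow> w \<bullet> u = 0"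
    by (rule det2_zero_imp_annihilator) auto
  obtain r where r: "r \<ge> 0"
    "\<And>E. E \<in> sets borel \<Longrightarrow> packing L E \<Longrightarrow> emeasure lborel E \<le> ennreal r"
    using packing_emeasure_bounded by blast
  obtain \<rho> where \<rho>: "\<rho> > 0" "packing L (h3_box \<rho>)"
    using small_box_packing by blast
  obtain N where N: "r < real N * (8 * \<rho>^3)"
    using ex_less_of_nat_mult[of "8 * \<rho>^3" r] \<rho>(1) by auto
  have "\<And>g. g \<in> L \<Longrightarrow> w \<bullet> h3_p g = 0" using w(2) by blast
  then obtain E where E: "E \<in> sets borel" "packing L E"
    "emeasure lborel E = ennreal (real N * (8 * \<rho>^3))"
    using large_packing_if_annihilated[OF w(1) _ \<rho>] by blast
  then have "ennreal (real N * (8 * \<rho>^3)) \<le> ennreal r"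
    using r(2)[OF E(1,2)] by simp
  then have "real N * (8 * \<rho>^3) \<le> r"
    using ennreal_le_iff[OF r(1)] by blast
  with N show False by simp
qed

end

section \<open>Discrete subgroups of the line and the plane\<close>

lemma int_multiple_mem:
  fixes S :: "'a::real_vector set"
  assumes zero: "0 \<in> S" and add: "\<And>x y. x \<in> S \<Longrightarrow> y \<in> S \<Longrightarrow> x + y \<in> S"
    and uminus: "\<And>x. x \<in> S \<Longrightarrow> - x \<in> S" and x: "x \<in> S"
  shows "of_int m *\<^sub>R x \<in> S"
proof -
  have nat: "real k *\<^sub>R x \<in> S" for k :: nat
    by (induction k) (auto simp: zero add x scaleR_add_left)
  show ?thesis
  proof (cases "m \<ge> 0")
    case True
    then show ?thesis using nat[of "nat m"] by simp
  next
    case False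
    then have "of_int m *\<^sub>R x = - (real (nat (- m)) *\<^sub>R x)" by simp
    then show ?thesis using uminus[OF nat[of "nat (- m)"]] by simp
  qed
qed

lemma discrete_set_real_least_element:
  fixes P :: "real set"
  assumes "P \<noteq> {}" "\<And>t. t \<in> P \<Longrightarrow> 0 < t"
    and gap: "e > 0" "\<And>s t. s \<in> P \<Longrightarrow> t \<in> P \<Longrightarrow> s < t \<Longrightarrow> e \<le> t - s"
  obtains \<xi> where "\<xi> \<in> P" "\<And>t. t \<in> P \<Longrightarrow> \<xi> \<le> t"
proof -
  have bdd: "bdd_below P" by (rule bdd_belowI[of _ 0]) (simp add: assms(2) less_imp_le)
  have low: "Inf P \<le> t" if "t \<in> P" for t by (rule cInf_lower[OF that bdd])
  have "Inf P \<in> P"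
  proof (rule ccontr)
    assume nin: "Inf P \<notin> P"
    obtain t1 where t1: "t1 \<in> P" "t1 < Inf P + e"
      using cInf_less_iff[OF assms(1) bdd, of "Inf P + e"] gap(1) by auto
    have "Inf P < t1" using low[OF t1(1)] nin t1(1) by (cases "Inf P = t1") auto
    then obtain t2 where t2: "t2 \<in> P" "t2 < t1"
      using cInf_less_iff[OF assms(1) bdd] by auto
    with t1 low[OF t2(1)] gap(2)[OF t2(1) t1(1)] show False by linarith
  qed
  with low that show ?thesis by blast
qed

lemma discrete_subgroup_real_cyclic:
  fixes G :: "real set"
  assumes zero: "0 \<in> G" and add: "\<And>x y. x \<in> G \<Longrightarrow> y \<in> G \<Longrightarrow> x + y \<in> G"
    and uminus: "\<And>x. x \<in> G \<Longrightarrow> - x \<in> G" and nontrivial: "t0 \<in> G" "t0 \<noteq> 0"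
    and gap: "e > 0" "\<And>t. t \<in> G \<Longrightarrow> \<bar>t\<bar> < e \<Longrightarrow> t = 0"
  obtains \<xi> where "\<xi> > 0" "G = {of_int m * \<xi> | m. True}"
proof -
  define Pos where "Pos = {t \<in> G. t > 0}"
  have diff: "x - y \<in> G" if "x \<in> G" "y \<in> G" for x y
    using add[OF that(1) uminus[OF that(2)]] by simp
  have "\<bar>t0\<bar> \<in> Pos" using nontrivial uminus[OF nontrivial(1)] by (auto simp: Pos_def abs_if)
  then have "Pos \<noteq> {}" by blast
  moreover have "\<And>t. t \<in> Pos \<Longrightarrow> 0 < t" by (simp add: Pos_def)
  moreover have "e \<le> t - s" if "s \<in> Pos" "t \<in> Pos" "s < t" for s t
  proof (rule ccontr)
    assume "\<not> e \<le> t - s"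
    then have "t - s = 0" using gap(2)[OF diff[of t s]] that by (simp add: Pos_def)
    with that(3) show False by simp
  qed
  ultimately obtain \<xi> where \<xi>: "\<xi> \<in> Pos" "\<And>t. t \<in> Pos \<Longrightarrow> \<xi> \<le> t"
    using discrete_set_real_least_element[OF _ _ gap(1)] by blast
  then have \<xi>_pos: "\<xi> > 0" and \<xi>_G: "\<xi> \<in> G" by (auto simp: Pos_def)
  have mult: "of_int m * \<xi> \<in> G" for m
    using int_multiple_mem[OF zero add uminus \<xi>_G, of m] by simp
  have "t \<in> {of_int m * \<xi> | m. True}" if t: "t \<in> G" for t
  proof -
    define m where "m = \<lfloor>t / \<xi>\<rfloor>"
    have "of_int m \<le> t / \<xi>" "t / \<xi> < of_int m + 1"
      unfolding m_def by (simp, rule real_of_int_floor_add_one_gt)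
    then have "of_int m * \<xi> \<le> t" "t < (of_int m + 1) * \<xi>"
      using \<xi>_pos by (simp_all add: le_divide_eq divide_less_eq)
    moreover have "\<not> t - of_int m * \<xi> > 0"
    proof
      assume "t - of_int m * \<xi> > 0"
      then have "\<xi> \<le> t - of_int m * \<xi>" using \<xi>(2) diff[OF t mult] by (simp add: Pos_def)
      with \<open>t < (of_int m + 1) * \<xi>\<close> show False by (simp add: algebra_simps)
    qed
    ultimately have "t = of_int m * \<xi>" by simp
    then show ?thesis by blast
  qed
  with mult have "G = {of_int m * \<xi> | m. True}" by blast
  with \<xi>_pos that show ?thesis by blast
qed

lemma xi_eqI:
  assumes "\<xi> > 0" "{t. h3_c t \<in> L} = {of_int m * \<xi> | m. True}"
  shows "xi L = \<xi>"
  unfolding xi_def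
proof (rule the_equality)
  show "\<xi> > 0 \<and> {t. h3_c t \<in> L} = {of_int m * \<xi> | m. True}" using assms by simp
  fix x assume x: "x > 0 \<and> {t. h3_c t \<in> L} = {of_int m * x | m. True}"
  have "\<xi> \<in> {of_int m * x | m. True}" "x \<in> {of_int m * \<xi> | m. True}"
    using assms(2) x by (metis (mono_tags, lifting) mem_Collect_eq mult_1 of_int_1)+
  then obtain a b where a: "\<xi> = of_int a * x" and b: "x = of_int b * \<xi>" by blast
  have "of_int (a * b) * \<xi> = 1 * \<xi>" using a b by simp
  then have "a * b = 1" using assms(1) by (metis mult_cancel_right of_int_eq_1_iff less_irrefl)
  moreover have "b > 0" using b x assms(1) by (metis of_int_0_less_iff zero_less_mult_pos2)
  ultimately have "b = 1" by (simp add: zmult_eq_1_iff)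
  then show "x = \<xi>" using b by simp
qed

lemma det2_Cramer:
  assumes "det2 u1 u2 \<noteq> 0"
  shows "v = (det2 v u2 / det2 u1 u2) *\<^sub>R u1 + (det2 u1 v / det2 u1 u2) *\<^sub>R u2"
proof -
  have "det2 u1 u2 *\<^sub>R v = det2 v u2 *\<^sub>R u1 + det2 u1 v *\<^sub>R u2"
    by (simp add: vec_eq_iff forall_2 det2_def algebra_simps)
  then have "inverse (det2 u1 u2) *\<^sub>R (det2 u1 u2 *\<^sub>R v)
      = inverse (det2 u1 u2) *\<^sub>R (det2 v u2 *\<^sub>R u1 + det2 u1 v *\<^sub>R u2)"
    by simp
  then show ?thesis
    using assms by (simp add: scaleR_add_right divide_inverse mult.commute)
qed

text \<open>A pair of elements of P with minimal nonzero determinant is a basis of P: reducing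
  the Cramer coefficients of v modulo 1 yields an element of P whose determinant with
  u1 or u2 is a proper fraction of the minimal one.\<close>

lemma int_span_if_det2_minimal:
  fixes P :: "(real^2) set"
  assumes zero: "0 \<in> P" and add: "\<And>x y. x \<in> P \<Longrightarrow> y \<in> P \<Longrightarrow> x + y \<in> P"
    and uminus: "\<And>x. x \<in> P \<Longrightarrow> - x \<in> P"
    and u: "u1 \<in> P" "u2 \<in> P" "det2 u1 u2 \<noteq> 0"
    and minimal: "\<And>u v. u \<in> P \<Longrightarrow> v \<in> P \<Longrightarrow> det2 u v \<noteq> 0 \<Longrightarrow> \<bar>det2 u1 u2\<bar> \<le> \<bar>det2 u v\<bar>"
    and v: "v \<in> P"
  shows "\<exists>a b::int. v = of_int a *\<^sub>R u1 + of_int b *\<^sub>R u2"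
proof -
  define D where "D = det2 u1 u2"
  define \<alpha> where "\<alpha> = det2 v u2 / D"
  define \<beta> where "\<beta> = det2 u1 v / D"
  define w where "w = v - of_int \<lfloor>\<alpha>\<rfloor> *\<^sub>R u1 - of_int \<lfloor>\<beta>\<rfloor> *\<^sub>R u2"
  have D: "D \<noteq> 0" using u(3) by (simp add: D_def)
  have v_eq: "v = \<alpha> *\<^sub>R u1 + \<beta> *\<^sub>R u2"
    unfolding \<alpha>_def \<beta>_def D_def by (rule det2_Cramer[OF u(3)])
  have "w \<in> P"
    using int_multiple_mem[OF zero add uminus] u(1,2) v add uminus
    unfolding w_def by (metis diff_conv_add_uminus)
  have frac_zero: "t = of_int \<lfloor>t\<rfloor>" if "\<bar>det2 u1 u2\<bar> \<le> \<bar>(t - of_int \<lfloor>t\<rfloor>) * D\<bar> \<or> (t - of_int \<lfloor>t\<rfloor>) * D = 0" for t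
  proof (rule ccontr)
    assume "t \<noteq> of_int \<lfloor>t\<rfloor>"
    then have "0 < t - of_int \<lfloor>t\<rfloor>" "t - of_int \<lfloor>t\<rfloor> < 1"
      by (simp_all add: less_le) linarith
    then have "0 < \<bar>(t - of_int \<lfloor>t\<rfloor>) * D\<bar>" "\<bar>(t - of_int \<lfloor>t\<rfloor>) * D\<bar> < \<bar>D\<bar>"
      using D by (simp_all add: abs_mult)
    with that show False by (simp add: D_def)
  qed
  have "det2 w u2 = det2 v u2 - of_int \<lfloor>\<alpha>\<rfloor> * D" "det2 u1 w = det2 u1 v - of_int \<lfloor>\<beta>\<rfloor> * D"
    by (simp_all add: w_def D_def det2_def algebra_simps)
  moreover have "det2 v u2 = \<alpha> * D" "det2 u1 v = \<beta> * D"
    using D by (simp_all add: \<alpha>_def \<beta>_def)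
  ultimately have "det2 w u2 = (\<alpha> - of_int \<lfloor>\<alpha>\<rfloor>) * D" "det2 u1 w = (\<beta> - of_int \<lfloor>\<beta>\<rfloor>) * D"
    by (simp_all add: algebra_simps)
  then have "\<alpha> = of_int \<lfloor>\<alpha>\<rfloor>" "\<beta> = of_int \<lfloor>\<beta>\<rfloor>"
    using minimal[OF \<open>w \<in> P\<close> u(2)] minimal[OF u(1) \<open>w \<in> P\<close>] frac_zero by metis+
  then show ?thesis using v_eq by metis
qed

lemma Zvec_iff: "z \<in> Zvec \<longleftrightarrow> (\<exists>a b. z = vector [of_int a, of_int b])"
proof
  assume "z \<in> Zvec"
  then obtain a b where "z$1 = of_int a" "z$2 = of_int b"
    by (metis Ints_cases Zvec_def mem_Collect_eq)
  then show "\<exists>a b. z = vector [of_int a, of_int b]"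
    by (auto simp: vec_eq_iff forall_2)
qed (auto simp: Zvec_def forall_2)

lemma det2_minimal_pair:
  fixes P :: "(real^2) set"
  assumes \<xi>: "\<xi> > 0" "\<And>u v. u \<in> P \<Longrightarrow> v \<in> P \<Longrightarrow> \<exists>m::int. det2 u v = of_int m * \<xi>"
    and nondegenerate: "u \<in> P" "v \<in> P" "det2 u v \<noteq> 0"
  obtains u1 u2 where "u1 \<in> P" "u2 \<in> P" "det2 u1 u2 \<noteq> 0"
    "\<And>u v. u \<in> P \<Longrightarrow> v \<in> P \<Longrightarrow> det2 u v \<noteq> 0 \<Longrightarrow> \<bar>det2 u1 u2\<bar> \<le> \<bar>det2 u v\<bar>"
proof -
  define Ns where "Ns = {n::nat. \<exists>u\<in>P. \<exists>v\<in>P. det2 u v \<noteq> 0 \<and> \<bar>det2 u v\<bar> = real n * \<xi>}"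
  have in_Ns: "\<exists>n\<in>Ns. \<bar>det2 u v\<bar> = real n * \<xi>"
    if uv: "u \<in> P" "v \<in> P" "det2 u v \<noteq> 0" for u v
  proof -
    obtain m where "det2 u v = of_int m * \<xi>" using \<xi>(2)[OF uv(1,2)] by blast
    then have "\<bar>det2 u v\<bar> = real (nat \<bar>m\<bar>) * \<xi>" using \<xi>(1) by (simp add: abs_mult)
    with uv show ?thesis unfolding Ns_def by blast
  qed
  define n0 where "n0 = (LEAST n. n \<in> Ns)"
  have "n0 \<in> Ns"
    unfolding n0_def using in_Ns[OF nondegenerate] by (metis LeastI)
  then obtain u1 u2 where u: "u1 \<in> P" "u2 \<in> P" "det2 u1 u2 \<noteq> 0" "\<bar>det2 u1 u2\<bar> = real n0 * \<xi>"
    unfolding Ns_def by blast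
  have "\<bar>det2 u1 u2\<bar> \<le> \<bar>det2 u v\<bar>" if uv: "u \<in> P" "v \<in> P" "det2 u v \<noteq> 0" for u v
  proof -
    obtain n where n: "n \<in> Ns" "\<bar>det2 u v\<bar> = real n * \<xi>" using in_Ns[OF uv] by blast
    then have "n0 \<le> n" unfolding n0_def by (intro Least_le) (rule n(1))
    then show ?thesis using n(2) u(4) \<xi>(1) by (simp add: mult_right_mono)
  qed
  with u(1-3) that show ?thesis by blast
qed

lemma lattice_if_det2_discrete:
  fixes P :: "(real^2) set"
  assumes zero: "0 \<in> P" and add: "\<And>x y. x \<in> P \<Longrightarrow> y \<in> P \<Longrightarrow> x + y \<in> P"
    and uminus: "\<And>x. x \<in> P \<Longrightarrow> - x \<in> P"
    and \<xi>: "\<xi> > 0" "\<And>u v. u \<in> P \<Longrightarrow> v \<in> P \<Longrightarrow> \<exists>m::int. det2 u v = of_int m * \<xi>"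
    and nondegenerate: "u \<in> P" "v \<in> P" "det2 u v \<noteq> 0"
  obtains A where "invertible A" "P = (\<lambda>z. A *v z) ` Zvec"
proof -
  obtain u1 u2 where u: "u1 \<in> P" "u2 \<in> P" "det2 u1 u2 \<noteq> 0"
    and minimal: "\<And>u v. u \<in> P \<Longrightarrow> v \<in> P \<Longrightarrow> det2 u v \<noteq> 0 \<Longrightarrow> \<bar>det2 u1 u2\<bar> \<le> \<bar>det2 u v\<bar>"
    using det2_minimal_pair[OF \<xi> nondegenerate] by blast
  define A :: "real^2^2" where "A = (\<chi> i j. if j = 1 then u1$i else u2$i)"
  have A_mult: "A *v z = z$1 *\<^sub>R u1 + z$2 *\<^sub>R u2" for z
    by (simp add: vec_eq_iff forall_2 A_def matrix_vector_mult_def sum_2 mult.commute)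
  have "det A = det2 u1 u2" by (simp add: det_2 A_def det2_def mult.commute)
  then have "invertible A" using u(3) by (simp add: invertible_det_nz)
  moreover have "P = (\<lambda>z. A *v z) ` Zvec"
  proof (intro equalityI subsetI)
    fix v assume "v \<in> P"
    then obtain a b :: int where "v = of_int a *\<^sub>R u1 + of_int b *\<^sub>R u2"
      using int_span_if_det2_minimal[OF zero add uminus u(1-3) minimal] by blast
    then have "v = A *v vector [of_int a, of_int b]" by (simp add: A_mult)
    moreover have "vector [of_int a, of_int b] \<in> Zvec" by (auto simp: Zvec_iff)
    ultimately show "v \<in> (\<lambda>z. A *v z) ` Zvec" by blast
  next
    fix v assume "v \<in> (\<lambda>z. A *v z) ` Zvec"
    then obtain a b where "v = of_int a *\<^sub>R u1 + of_int b *\<^sub>R u2"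
      by (auto simp: Zvec_iff A_mult)
    then show "v \<in> P"
      using add int_multiple_mem[OF zero add uminus] u(1,2) by simp
  qed
  ultimately show ?thesis using that by blast
qed

context h3_lat begin

lemma xi_center: "xi L > 0" "{t. h3_c t \<in> L} = {of_int m * xi L | m. True}"
proof -
  obtain g h where gh: "g \<in> L" "h \<in> L" "det2 (h3_p g) (h3_p h) \<noteq> 0"
    using noncollinear by blast
  obtain e where e: "e > 0" "\<And>y. y \<in> L \<Longrightarrow> norm y < e \<Longrightarrow> y = h3_one"
    using one_isolated by blast
  obtain \<xi> where "\<xi> > 0" "{t. h3_c t \<in> L} = {of_int m * \<xi> | m. True}"
  proof (rule discrete_subgroup_real_cyclic[OF _ _ _ _ gh(3) e(1)])
    show "0 \<in> {t. h3_c t \<in> L}" using one_mem h3_c_eq_one_iff[of 0] by simp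
    show "x + y \<in> {t. h3_c t \<in> L}" if "x \<in> {t. h3_c t \<in> L}" "y \<in> {t. h3_c t \<in> L}" for x y
      using mult_mem[of "h3_c x" "h3_c y"] that by (simp add: h3_c_mult)
    show "- x \<in> {t. h3_c t \<in> L}" if "x \<in> {t. h3_c t \<in> L}" for x
      using inv_mem[of "h3_c x"] that by (simp add: h3_c_inv)
    show "det2 (h3_p g) (h3_p h) \<in> {t. h3_c t \<in> L}"
      using commutator_mem[OF gh(1,2)] by simp
    show "t = 0" if "t \<in> {t. h3_c t \<in> L}" "\<bar>t\<bar> < e" for t
    proof -
      have "norm (h3_c t) < e" using norm_h3_le[of "h3_c t"] that(2) by (simp add: h3_c_def)
      then show ?thesis using e(2)[of "h3_c t"] that(1) by (simp add: h3_c_eq_one_iff)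
    qed
  qed
  then show "xi L > 0" "{t. h3_c t \<in> L} = {of_int m * xi L | m. True}"
    by (simp_all add: xi_eqI)
qed

lemma projection_lattice: obtains A where "invertible A" "h3_p ` L = (\<lambda>z. A *v z) ` Zvec"
proof -
  obtain g h where gh: "g \<in> L" "h \<in> L" "det2 (h3_p g) (h3_p h) \<noteq> 0"
    using noncollinear by blast
  show ?thesis
  proof (rule lattice_if_det2_discrete[OF _ _ _ xi_center(1)])
    show "0 \<in> h3_p ` L" using one_mem h3_p_one by (metis image_eqI)
    show "x + y \<in> h3_p ` L" if "x \<in> h3_p ` L" "y \<in> h3_p ` L" for x y
      using that mult_mem h3_p_mult by (metis (no_types, lifting) imageE image_eqI)
    show "- x \<in> h3_p ` L" if "x \<in> h3_p ` L" for x
      using that inv_mem h3_p_inv by (metis (no_types, lifting) imageE image_eqI)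
    show "\<exists>m::int. det2 u v = of_int m * xi L" if "u \<in> h3_p ` L" "v \<in> h3_p ` L" for u v
      using that commutator_mem xi_center(2) by blast
  qed (use gh that in auto)
qed

end

section \<open>Dual lattices and off-rational sets\<close>

lemma matrix_inv_right: "invertible M \<Longrightarrow> M ** matrix_inv M = mat 1"
  and matrix_inv_left: "invertible M \<Longrightarrow> matrix_inv M ** M = mat 1"
  unfolding invertible_def matrix_inv_def by (metis (mono_tags, lifting) someI_ex)+

lemma matrix_inv_mult_vector:
  fixes M :: "'a::comm_semiring_1^'n^'n"
  assumes "invertible M"
  shows "M *v (matrix_inv M *v x) = x" "matrix_inv M *v (M *v x) = x"
  by (simp_all add: matrix_vector_mul_assoc matrix_inv_right[OF assms] matrix_inv_left[OF assms])

lemma invertible_matrix_inv: "invertible M \<Longrightarrow> invertible (matrix_inv M)"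
  using matrix_inv_right matrix_inv_left unfolding invertible_def by blast

lemma det_matrix_inv:
  assumes "invertible (M::real^'n^'n)"
  shows "det (matrix_inv M) = inverse (det M)"
proof -
  have "det M * det (matrix_inv M) = 1"
    using det_mul[of M "matrix_inv M"] matrix_inv_right[OF assms] by simp
  then show ?thesis by (rule inverse_unique[symmetric])
qed

lemma mem_matrix_image_iff:
  fixes M :: "'a::comm_semiring_1^'n^'n"
  assumes "invertible M"
  shows "x \<in> (\<lambda>z. M *v z) ` S \<longleftrightarrow> matrix_inv M *v x \<in> S"
proof
  show "x \<in> (\<lambda>z. M *v z) ` S" if "matrix_inv M *v x \<in> S"
    using that matrix_inv_mult_vector(1)[OF assms, of x] by (metis image_eqI)
qed (auto simp: matrix_inv_mult_vector[OF assms])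

lemma mem_matrix_inv_image_iff:
  fixes M :: "'a::comm_semiring_1^'n^'n"
  assumes "invertible M"
  shows "x \<in> (\<lambda>z. matrix_inv M *v z) ` S \<longleftrightarrow> M *v x \<in> S"
proof
  show "x \<in> (\<lambda>z. matrix_inv M *v z) ` S" if "M *v x \<in> S"
    using that matrix_inv_mult_vector(2)[OF assms, of x] by (metis image_eqI)
qed (auto simp: matrix_inv_mult_vector[OF assms])

lemma axis_in_Zvec: "axis i 1 \<in> Zvec"
  by (simp add: Zvec_def axis_def)

lemma det_eq_det2_columns: "det (M::real^2^2) = det2 (M *v axis 1 1) (M *v axis 2 1)"
  by (simp add: det_2 det2_def matrix_vector_mult_basis column_def)

lemma det2_matrix_vector_mult: "det2 (M *v u) (M *v v) = det M * det2 u v"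
  by (simp add: det_2 det2_def matrix_vector_mult_def sum_2 algebra_simps)

lemma int_matrix_iff_columns: "int_matrix M \<longleftrightarrow> (\<forall>i. M *v axis i 1 \<in> Zvec)"
  by (auto simp: int_matrix_def Zvec_def matrix_vector_mult_basis column_def)

lemma det2_Zvec: "u \<in> Zvec \<Longrightarrow> v \<in> Zvec \<Longrightarrow> det2 u v \<in> \<int>"
  by (simp add: det2_def Zvec_def)

lemma inner_Zvec: "u \<in> Zvec \<Longrightarrow> v \<in> Zvec \<Longrightarrow> u \<bullet> v \<in> \<int>"
  by (simp add: inner_real2 Zvec_def)

lemma dual_basis_eq:
  fixes A :: "real^2^2"
  assumes A: "invertible A"
  shows "(\<lambda>z. matrix_inv (transpose A) *v z) ` Zvec = {v. \<forall>q\<in>(\<lambda>z. A *v z) ` Zvec. v \<bullet> q \<in> \<int>}"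
proof -
  have At: "invertible (transpose A)" using A by (rule transpose_invertible)
  have adjoint: "v \<bullet> (A *v z) = (transpose A *v v) \<bullet> z" for v z
    by (simp add: dot_lmul_matrix[symmetric])
  have dual_iff: "transpose A *v v \<in> Zvec \<longleftrightarrow> (\<forall>z\<in>Zvec. v \<bullet> (A *v z) \<in> \<int>)" for v
  proof
    show "\<forall>z\<in>Zvec. v \<bullet> (A *v z) \<in> \<int>" if "transpose A *v v \<in> Zvec"
      unfolding adjoint using that inner_Zvec by blast
    assume "\<forall>z\<in>Zvec. v \<bullet> (A *v z) \<in> \<int>"
    then have "(transpose A *v v) \<bullet> axis i 1 \<in> \<int>" for i
      using axis_in_Zvec by (simp only: adjoint)
    then show "transpose A *v v \<in> Zvec"
      by (simp add: Zvec_def cart_eq_inner_axis del: transpose_matrix_vector)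
  qed
  show ?thesis
  proof (rule set_eqI)
    fix v
    have "v \<in> (\<lambda>z. matrix_inv (transpose A) *v z) ` Zvec \<longleftrightarrow> transpose A *v v \<in> Zvec"
      by (rule mem_matrix_inv_image_iff[OF At])
    also have "\<dots> \<longleftrightarrow> v \<in> {v. \<forall>q\<in>(\<lambda>z. A *v z) ` Zvec. v \<bullet> q \<in> \<int>}"
      unfolding dual_iff by blast
    finally show "v \<in> (\<lambda>z. matrix_inv (transpose A) *v z) ` Zvec
        \<longleftrightarrow> v \<in> {v. \<forall>q\<in>(\<lambda>z. A *v z) ` Zvec. v \<bullet> q \<in> \<int>}" .
  qed
qed

lemma dual_lattice_eq:
  assumes "invertible A" "P = (\<lambda>z. A *v z) ` Zvec"
  shows "dual_lattice P = {v. \<forall>q\<in>P. v \<bullet> q \<in> \<int>}"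
proof -
  define A' where "A' = (SOME A :: real^2^2. invertible A \<and> P = (\<lambda>z. A *v z) ` Zvec)"
  have A': "invertible A' \<and> P = (\<lambda>z. A' *v z) ` Zvec"
    unfolding A'_def by (rule someI[of _ A]) (use assms in blast)
  have "dual_lattice P = (\<lambda>z. matrix_inv (transpose A') *v z) ` Zvec"
    unfolding dual_lattice_def Let_def A'_def ..
  with A' show ?thesis by (simp add: dual_basis_eq)
qed

text \<open>An increasing union of lattices B_j Z^2 is off-rational: relative to B_0 Z^2 the
  lattice B_j Z^2 is the preimage of Z^2 under the integer matrix B_j^-1 B_0.\<close>

lemma off_rat_rep_nested_Union:
  fixes B :: "nat \<Rightarrow> real^2^2"
  assumes inv: "\<And>j. invertible (B j)"
    and nested: "\<And>j. (\<lambda>z. B j *v z) ` Zvec \<subseteq> (\<lambda>z. B (Suc j) *v z) ` Zvec"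
  shows "off_rat_rep (\<Union>j. (\<lambda>z. B j *v z) ` Zvec) (B 0) (\<lambda>j. matrix_inv (B j) ** B 0)"
proof -
  define As where "As j = matrix_inv (B j) ** B 0" for j
  have As_inv: "invertible (As j)" for j
    unfolding As_def by (intro invertible_mult invertible_matrix_inv inv)
  have Q_eq: "(\<lambda>z. matrix_inv (As j) *v z) ` Zvec = {x. B 0 *v x \<in> (\<lambda>z. B j *v z) ` Zvec}" for j
    by (rule set_eqI)
       (simp add: mem_matrix_inv_image_iff[OF As_inv] mem_matrix_image_iff[OF inv],
        simp add: As_def matrix_vector_mul_assoc)
  have mono: "(\<lambda>z. B i *v z) ` Zvec \<subseteq> (\<lambda>z. B j *v z) ` Zvec" if "i \<le> j" for i j
    using lift_Suc_mono_le[of "\<lambda>j. (\<lambda>z. B j *v z) ` Zvec", OF nested that] .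
  have As_int: "int_matrix (As j)" for j
    unfolding int_matrix_iff_columns
  proof
    fix i
    have "B 0 *v axis i 1 \<in> (\<lambda>z. B j *v z) ` Zvec"
      using mono[of 0 j] axis_in_Zvec by blast
    then show "As j *v axis i 1 \<in> Zvec"
      by (simp add: mem_matrix_image_iff[OF inv] As_def matrix_vector_mul_assoc[symmetric])
  qed
  have Q_nested: "(\<lambda>z. matrix_inv (As j) *v z) ` Zvec \<subseteq> (\<lambda>z. matrix_inv (As (Suc j)) *v z) ` Zvec"
    for j
    unfolding Q_eq using nested[of j] by blast
  have "(\<Union>j. (\<lambda>z. B j *v z) ` Zvec)
      = (\<lambda>q. B 0 *v q) ` (\<Union>j. (\<lambda>z. matrix_inv (As j) *v z) ` Zvec)"
    unfolding Q_eq
  proof (intro equalityI subsetI)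
    fix v assume "v \<in> (\<Union>j. (\<lambda>z. B j *v z) ` Zvec)"
    then have "matrix_inv (B 0) *v v \<in> (\<Union>j. {x. B 0 *v x \<in> (\<lambda>z. B j *v z) ` Zvec})"
      by (simp add: matrix_inv_mult_vector(1)[OF inv])
    moreover have "v = B 0 *v (matrix_inv (B 0) *v v)"
      by (simp add: matrix_inv_mult_vector(1)[OF inv])
    ultimately show "v \<in> (\<lambda>q. B 0 *v q) ` (\<Union>j. {x. B 0 *v x \<in> (\<lambda>z. B j *v z) ` Zvec})"
      by (rule rev_image_eqI)
  qed blast
  with inv As_inv As_int Q_nested show ?thesis
    unfolding off_rat_rep_def As_def[symmetric] by blast
qed

lemma det_mem_off_rat_rep:
  assumes rep: "off_rat_rep S A As" and C: "(\<lambda>z. C *v z) ` Zvec \<subseteq> S"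
  shows "\<exists>i n. det C = det A / det (As i) * of_int n"
proof -
  define Q where "Q i = (\<lambda>z. matrix_inv (As i) *v z) ` Zvec" for i
  have S: "S = (\<lambda>q. A *v q) ` (\<Union>i. Q i)" and As_inv: "\<And>i. invertible (As i)"
    using rep by (simp_all add: off_rat_rep_def Q_def)
  have Q_mono: "i \<le> i' \<Longrightarrow> Q i \<subseteq> Q i'" for i i'
    by (rule lift_Suc_mono_le[of Q]) (use rep in \<open>simp_all add: off_rat_rep_def Q_def\<close>)
  have "C *v axis k 1 \<in> S" for k
    using C axis_in_Zvec by blast
  then obtain i1 i2 q1 q2 where q: "q1 \<in> Q i1" "q2 \<in> Q i2"
    "C *v axis 1 1 = A *v q1" "C *v axis 2 1 = A *v q2"
    unfolding S by blast
  define i where "i = max i1 i2"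
  have "q1 \<in> Q i" "q2 \<in> Q i"
    using q(1,2) Q_mono[of i1 i] Q_mono[of i2 i] by (auto simp: i_def)
  then obtain y1 y2 where y: "y1 \<in> Zvec" "y2 \<in> Zvec"
    "q1 = matrix_inv (As i) *v y1" "q2 = matrix_inv (As i) *v y2"
    by (auto simp: Q_def)
  obtain n where n: "det2 y1 y2 = of_int n"
    using det2_Zvec[OF y(1,2)] by (metis Ints_cases)
  have "det C = det2 (C *v axis 1 1) (C *v axis 2 1)"
    by (rule det_eq_det2_columns)
  also have "\<dots> = det (A ** matrix_inv (As i)) * det2 y1 y2"
    by (simp add: q(3,4) y(3,4) matrix_vector_mul_assoc det2_matrix_vector_mult)
  also have "\<dots> = det A / det (As i) * of_int n"
    by (simp add: det_mul det_matrix_inv[OF As_inv] n divide_inverse)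
  finally show ?thesis by blast
qed

lemma tau_eq_of_off_rat_rep:
  assumes "off_rat_rep S A0 As0"
  obtains A As where "off_rat_rep S A As"
    "tau S = (\<Union>j. {det A / det (As j) * of_int m | m. True})"
proof -
  have "\<exists>T. \<exists>A As. off_rat_rep S A As \<and> T = (\<Union>j. {det A / det (As j) * of_int m | m. True})"
    using assms by blast
  then have "\<exists>A As. off_rat_rep S A As \<and> tau S = (\<Union>j. {det A / det (As j) * of_int m | m. True})"
    unfolding tau_def by (rule someI_ex)
  with that show ?thesis by blast
qed

context h3_lat begin

lemma dual_projection_eq: "dual_lattice (h3_p ` L) = {v. \<forall>g\<in>L. v \<bullet> h3_p g \<in> \<int>}"
proof -
  obtain A where "invertible A" "h3_p ` L = (\<lambda>z. A *v z) ` Zvec"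
    using projection_lattice by blast
  from dual_lattice_eq[OF this] show ?thesis by simp
qed

lemma det_basis_mem_center:
  assumes "h3_p ` L = (\<lambda>z. A *v z) ` Zvec"
  shows "\<exists>k::int. det A = of_int k * xi L"
proof -
  have "A *v axis i 1 \<in> h3_p ` L" for i
    using assms axis_in_Zvec by blast
  then obtain g h where "g \<in> L" "h \<in> L" "A *v axis 1 1 = h3_p g" "A *v axis 2 1 = h3_p h"
    by (metis imageE)
  then have "h3_c (det A) \<in> L" using commutator_mem by (simp add: det_eq_det2_columns)
  then show ?thesis using xi_center(2) by blast
qed

lemma dual_projection_basis:
  obtains B where "invertible B" "dual_lattice (h3_p ` L) = (\<lambda>z. B *v z) ` Zvec"
    "\<exists>k::int. inverse (xi L) = of_int k * det B"
proof -
  obtain A where A: "invertible A" "h3_p ` L = (\<lambda>z. A *v z) ` Zvec"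
    using projection_lattice by blast
  obtain k :: int where k: "det A = of_int k * xi L"
    using det_basis_mem_center[OF A(2)] by blast
  define B where "B = matrix_inv (transpose A)"
  have At: "invertible (transpose A)" using A(1) by (rule transpose_invertible)
  have "det A \<noteq> 0" using A(1) by (simp add: invertible_det_nz)
  then have "inverse (xi L) = of_int k * det B"
    using k by (simp add: B_def det_matrix_inv[OF At] det_transpose field_simps)
  moreover have "dual_lattice (h3_p ` L) = (\<lambda>z. B *v z) ` Zvec"
    using A by (simp add: dual_lattice_eq dual_basis_eq B_def)
  moreover have "invertible B" unfolding B_def by (rule invertible_matrix_inv[OF At])
  ultimately show ?thesis using that by blast
qed

end

text \<open>B j is a basis of the dual lattice p(\<Gamma>_j)^*.\<close>

lemma S_Gamma_dual_bases:
  assumes "\<And>j. h3_lattice (\<Gamma> j)" and "\<And>j. \<Gamma> (Suc j) \<subseteq> \<Gamma> j"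
  obtains B where "off_rat_rep (S_Gamma \<Gamma>) (B 0) (\<lambda>j. matrix_inv (B j) ** B 0)"
    "\<And>j. (\<lambda>z. B j *v z) ` Zvec \<subseteq> S_Gamma \<Gamma>"
    "\<And>j. \<exists>k::int. inverse (xi (\<Gamma> j)) = of_int k * det (B j)"
proof -
  have lat: "h3_lat (\<Gamma> j)" for j using assms(1) by (simp add: h3_lat_def)
  have "\<forall>j. \<exists>B. invertible B \<and> dual_lattice (h3_p ` \<Gamma> j) = (\<lambda>z. B *v z) ` Zvec
      \<and> (\<exists>k::int. inverse (xi (\<Gamma> j)) = of_int k * det B)"
    by (metis h3_lat.dual_projection_basis[OF lat])
  then obtain B where B: "\<And>j. invertible (B j)"
    "\<And>j. dual_lattice (h3_p ` \<Gamma> j) = (\<lambda>z. B j *v z) ` Zvec"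
    "\<And>j. \<exists>k::int. inverse (xi (\<Gamma> j)) = of_int k * det (B j)"
    by metis
  have "(\<lambda>z. B j *v z) ` Zvec \<subseteq> (\<lambda>z. B (Suc j) *v z) ` Zvec" for j
    using assms(2)[of j] by (auto simp: B(2)[symmetric] h3_lat.dual_projection_eq[OF lat])
  then have "off_rat_rep (S_Gamma \<Gamma>) (B 0) (\<lambda>j. matrix_inv (B j) ** B 0)"
    using off_rat_rep_nested_Union[of B, OF B(1)] by (simp add: S_Gamma_def B(2))
  moreover have "(\<lambda>z. B j *v z) ` Zvec \<subseteq> S_Gamma \<Gamma>" for j
    by (auto simp: S_Gamma_def B(2))
  ultimately show ?thesis using that B(3) by blast
qed

theorem proposition5p4:
  fixes \<Gamma> :: "nat \<Rightarrow> h3 set"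
  assumes "\<And>j. h3_lattice (\<Gamma> j)"
    and "\<And>j. \<Gamma> (Suc j) \<subseteq> \<Gamma> j"
  shows "xi_Gamma \<Gamma> \<subseteq> tau (S_Gamma \<Gamma>)"
proof
  obtain B where rep0: "off_rat_rep (S_Gamma \<Gamma>) (B 0) (\<lambda>j. matrix_inv (B j) ** B 0)"
    and B_sub: "\<And>j. (\<lambda>z. B j *v z) ` Zvec \<subseteq> S_Gamma \<Gamma>"
    and inverse_xi: "\<And>j. \<exists>k::int. inverse (xi (\<Gamma> j)) = of_int k * det (B j)"
    using S_Gamma_dual_bases[of \<Gamma>, OF assms] by blast
  obtain A As where rep: "off_rat_rep (S_Gamma \<Gamma>) A As"
    and tau: "tau (S_Gamma \<Gamma>) = (\<Union>i. {det A / det (As i) * of_int m | m. True})"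
    using tau_eq_of_off_rat_rep[OF rep0] by blast
  fix x assume "x \<in> xi_Gamma \<Gamma>"
  then obtain j m where x: "x = of_int m / xi (\<Gamma> j)" by (auto simp: xi_Gamma_def)
  obtain k :: int where k: "inverse (xi (\<Gamma> j)) = of_int k * det (B j)"
    using inverse_xi by blast
  obtain i n where "det (B j) = det A / det (As i) * of_int n"
    using det_mem_off_rat_rep[OF rep B_sub] by blast
  then have "x = det A / det (As i) * of_int (m * k * n)"
    by (simp add: x divide_inverse k)
  then show "x \<in> tau (S_Gamma \<Gamma>)" unfolding tau by blast
qed

end
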